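(* Let $X$ be a finite rack. There exists $N_0$ (depending on $X$) such that for every $N\ge N_0$ and every $w\in S_X$, left multiplication by $w$ is an injective map from $S_X^*(N)$ to itself.
   Context: A rack is a set $X$ with an operation $x^y$ such that $x\mapsto x^y$ is bijective for each $y$ and $(z^x)^y=(z^y)^{x^y}$. Its connected components $C_1,\dots,C_k$ are the classes of the smallest equivalence relation with $x\sim x^y$. $B_n$ acts on $X^n$ from the right by $(\dots,x_i,x_{i+1},\dots)^{\sigma_i}=(\dots,x_{i+1},x_i^{x_{i+1}},\dots)$. The structure semigroup is $S_X=\bigsqcup_{n\ge1}X^n/B_n$ with multiplication given by concatenation of representatives. For nonnegative $n_1,\dots,n_k$ with sum $n$, $X^*(n_1,\dots,n_k)$ is the set of $(x_1,\dots,x_n)\in X^n$ having exactly $n_j$ entries in $C_j$ for each $j$ and whose entries generate $X$ (lie in no proper subset closed under $x^y$). $S_X^*(N)=\bigcup_{n_1,\dots,n_k\ge N}X^*(n_1,\dots,n_k)/B_n$, which is an ideal of $S_X$. *)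

theory Defs
  imports Main
begin

text \<open>A rack on the (finite) type 'a, with operation op x y = x^y.\<close>
definition is_rack :: "('a \<Rightarrow> 'a \<Rightarrow> 'a) \<Rightarrow> bool" where
  "is_rack op \<longleftrightarrow> (\<forall>y. bij (\<lambda>x. op x y)) \<and>
     (\<forall>x y z. op (op z x) y = op (op z y) (op x y))"

definition comp_rel :: "('a \<Rightarrow> 'a \<Rightarrow> 'a) \<Rightarrow> ('a \<times> 'a) set" where
  "comp_rel op = (let R = {(x, op x y) | x y. True} in (R \<union> R\<inverse>)\<^sup>*)"

definition rack_components :: "('a \<Rightarrow> 'a \<Rightarrow> 'a) \<Rightarrow> 'a set set" where
  "rack_components op = UNIV // comp_rel op"

definition braid_step :: "('a \<Rightarrow> 'a \<Rightarrow> 'a) \<Rightarrow> 'a list \<Rightarrow> 'a list \<Rightarrow> bool" where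
  "braid_step op xs ys \<longleftrightarrow>
     (\<exists>u v a b. xs = u @ [a, b] @ v \<and> ys = u @ [b, op a b] @ v)"

definition braid_equiv :: "('a \<Rightarrow> 'a \<Rightarrow> 'a) \<Rightarrow> 'a list \<Rightarrow> 'a list \<Rightarrow> bool" where
  "braid_equiv op = (sup (braid_step op) (braid_step op)\<inverse>\<inverse>)\<^sup>*\<^sup>*"

definition braid_class :: "('a \<Rightarrow> 'a \<Rightarrow> 'a) \<Rightarrow> 'a list \<Rightarrow> 'a list set" where
  "braid_class op xs = {ys. braid_equiv op xs ys}"

text \<open>The structure semigroup S_X = disjoint union over n \<ge> 1 of X^n / B_n.\<close>
definition structure_semigroup :: "('a \<Rightarrow> 'a \<Rightarrow> 'a) \<Rightarrow> 'a list set set" where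
  "structure_semigroup op = {braid_class op xs | xs. xs \<noteq> []}"

definition sg_mult :: "('a \<Rightarrow> 'a \<Rightarrow> 'a) \<Rightarrow> 'a list set \<Rightarrow> 'a list set \<Rightarrow> 'a list set" where
  "sg_mult op w z = \<Union>{braid_class op (u @ v) | u v. u \<in> w \<and> v \<in> z}"

definition generates :: "('a \<Rightarrow> 'a \<Rightarrow> 'a) \<Rightarrow> 'a list \<Rightarrow> bool" where
  "generates op xs \<longleftrightarrow>
     \<not> (\<exists>Y. Y \<subset> UNIV \<and> set xs \<subseteq> Y \<and> (\<forall>a\<in>Y. \<forall>b\<in>Y. op a b \<in> Y))"

definition SX_star :: "('a \<Rightarrow> 'a \<Rightarrow> 'a) \<Rightarrow> nat \<Rightarrow> 'a list set set" where
  "SX_star op N = {braid_class op xs | xs. xs \<noteq> [] \<and> generates op xs \<and>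
      (\<forall>C\<in>rack_components op. card {i. i < length xs \<and> xs ! i \<in> C} \<ge> N)}"

end

theory Submission
  imports Defs
begin

text \<open>
  For a degree vector \<open>d\<close> (the number of entries in each connected component) let \<open>T(d)\<close>
  be the finite set of braid orbits of generating tuples of degree \<open>d\<close>; left multiplication
  by \<open>x \<in> C\<close> maps \<open>T(d)\<close> into \<open>T(d + e\<^sub>C)\<close>. Fix \<open>E > 0\<close> with \<open>f\<^sup>E = id\<close> for all
  permutations \<open>f\<close> of \<open>X\<close>. A block of \<open>E\<close> equal letters commutes with everything up to braid
  moves, and pushing it through a prefix \<open>p\<close> translates its letter by \<open>p\<close>. The letters of a
  generating tuple translate every element to every other element of its component, so a
  generating tuple with at least \<open>2E|X|\<close> entries in \<open>C\<close> is braid equivalent to one starting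
  with any prescribed \<open>x \<in> C\<close>. Hence left multiplication by \<open>x\<close> maps \<open>T(d)\<close> onto
  \<open>T(d + e\<^sub>C)\<close> for large \<open>d\<close>, and \<open>|T(d)|\<close> is antitone. For a large \<open>d\<^sup>*\<close> minimising
  \<open>|T(d)|\<close> we get \<open>|T(d)| = |T(d\<^sup>*)|\<close> for all \<open>d \<ge> d\<^sup>*\<close>, so left multiplication by a letter is
  injective on \<open>T(d)\<close>; peeling off the letters of \<open>w\<close> one at a time gives the theorem with
  \<open>N\<^sub>0 = max d\<^sup>*\<close>.
\<close>

section \<open>Braid equivalence\<close>

lemma equivp_braid_equiv: "equivp (braid_equiv op)"
  unfolding braid_equiv_def by (rule equivp_rtranclp) (auto intro: sympI)

lemma braid_equiv_refl [simp]: "braid_equiv op xs xs"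
  using equivp_braid_equiv equivp_reflp by metis

lemma braid_equiv_trans [trans]:
  "braid_equiv op xs ys \<Longrightarrow> braid_equiv op ys zs \<Longrightarrow> braid_equiv op xs zs"
  using equivp_braid_equiv equivp_transp by metis

lemma braid_class_eq_iff: "braid_class op xs = braid_class op ys \<longleftrightarrow> braid_equiv op xs ys"
  unfolding braid_class_def using equivp_braid_equiv
  by (metis equivp_def mem_Collect_eq)

lemma braid_step_imp_braid_equiv: "braid_step op xs ys \<Longrightarrow> braid_equiv op xs ys"
  unfolding braid_equiv_def by auto

lemma braid_equiv_invariant:
  assumes "\<And>xs ys. braid_step op xs ys \<Longrightarrow> f xs = f ys" and "braid_equiv op xs ys"
  shows "f xs = f ys"
  using assms(2) unfolding braid_equiv_def
  by (induction rule: rtranclp_induct) (auto dest: assms(1))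

lemma braid_equiv_append_cong:
  assumes "braid_equiv op xs ys"
  shows "braid_equiv op (p @ xs @ q) (p @ ys @ q)"
  using assms unfolding braid_equiv_def
proof (induction rule: rtranclp_induct)
  case (step ys zs)
  have "braid_step op (p @ us @ q) (p @ vs @ q)" if "braid_step op us vs" for us vs
    using that unfolding braid_step_def by (metis append.assoc)
  with step show ?case
    by (auto intro: rtranclp.rtrancl_into_rtrancl)
qed simp

lemma braid_equiv_Cons: "braid_equiv op xs ys \<Longrightarrow> braid_equiv op (a # xs) (a # ys)"
  using braid_equiv_append_cong[of op xs ys "[a]" "[]"] by simp

lemma braid_equiv_append_left: "braid_equiv op xs ys \<Longrightarrow> braid_equiv op (p @ xs) (p @ ys)"
  using braid_equiv_append_cong[of op xs ys p "[]"] by simp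

lemma braid_equiv_append_right: "braid_equiv op xs ys \<Longrightarrow> braid_equiv op (xs @ q) (ys @ q)"
  using braid_equiv_append_cong[of op xs ys "[]" q] by simp

lemma sg_mult_braid_class:
  "sg_mult op (braid_class op u) (braid_class op v) = braid_class op (u @ v)"
proof -
  have "braid_class op (u' @ v') = braid_class op (u @ v)"
    if "braid_equiv op u u'" "braid_equiv op v v'" for u' v'
    using that braid_equiv_append_left braid_equiv_append_right
    by (metis braid_class_eq_iff)
  moreover have "u \<in> braid_class op u" "v \<in> braid_class op v"
    by (simp_all add: braid_class_def)
  ultimately have "{braid_class op (u' @ v') | u' v'. u' \<in> braid_class op u \<and> v' \<in> braid_class op v}
      = {braid_class op (u @ v)}"
    unfolding braid_class_def by blast
  then show ?thesis
    unfolding sg_mult_def by simp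
qed

lemma braid_equiv_swap: "braid_equiv op (u @ a # b # v) (u @ b # op a b # v)"
  by (rule braid_step_imp_braid_equiv, unfold braid_step_def) force

lemma braid_equiv_snoc_to_front: "braid_equiv op (p @ [a]) (a # map (\<lambda>z. op z a) p)"
proof (induction p)
  case (Cons c p)
  have "braid_equiv op (c # p @ [a]) (c # a # map (\<lambda>z. op z a) p)"
    using Cons braid_equiv_Cons by fastforce
  also have "braid_equiv op \<dots> (a # op c a # map (\<lambda>z. op z a) p)"
    using braid_equiv_swap[of op "[]"] by simp
  finally show ?case by simp
qed simp

lemma braid_equiv_Cons_to_back: "braid_equiv op (a # p) (p @ [foldl op a p])"
proof (induction p arbitrary: a)
  case (Cons c p)
  have "braid_equiv op (a # c # p) (c # op a c # p)"
    using braid_equiv_swap[of op "[]"] by simp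
  also have "braid_equiv op \<dots> (c # p @ [foldl op (op a c) p])"
    using Cons.IH by (rule braid_equiv_Cons)
  finally show ?case by simp
qed simp

lemma braid_equiv_append_commute: "braid_equiv op (q @ p) (p @ map (\<lambda>a. foldl op a p) q)"
proof (induction q)
  case (Cons a q)
  have "braid_equiv op (a # q @ p) (a # p @ map (\<lambda>a. foldl op a p) q)"
    using Cons.IH by (rule braid_equiv_Cons)
  also have "braid_equiv op \<dots> ((p @ [foldl op a p]) @ map (\<lambda>a. foldl op a p) q)"
    using braid_equiv_Cons_to_back braid_equiv_append_right by (metis append_Cons)
  finally show ?case by simp
qed simp

lemma braid_equiv_replicate_prefix:
  "j \<le> count_list v y \<Longrightarrow> \<exists>rest. braid_equiv op v (replicate j y @ rest)"
proof (induction j arbitrary: v)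
  case (Suc j)
  have "y \<in> set v"
    using Suc.prems count_list_0_iff[of v y] by linarith
  then obtain p s where v: "v = p @ y # s" "y \<notin> set p"
    by (meson split_list_first)
  with Suc.prems have "j \<le> count_list (map (\<lambda>z. op z y) p @ s) y"
    by simp
  then obtain rest where "braid_equiv op (map (\<lambda>z. op z y) p @ s) (replicate j y @ rest)"
    using Suc.IH by blast
  then have "braid_equiv op (y # map (\<lambda>z. op z y) p @ s) (replicate (Suc j) y @ rest)"
    by (simp add: braid_equiv_Cons)
  moreover have "braid_equiv op ((p @ [y]) @ s) ((y # map (\<lambda>z. op z y) p) @ s)"
    by (rule braid_equiv_append_right[OF braid_equiv_snoc_to_front])
  ultimately have "braid_equiv op v (replicate (Suc j) y @ rest)"
    unfolding v(1) using braid_equiv_trans by fastforce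
  then show ?case ..
qed (auto intro: braid_equiv_refl)

section \<open>Connected components and degrees\<close>

lemma equiv_comp_rel: "equiv UNIV (comp_rel op)"
proof -
  have "sym ((R \<union> R\<inverse>)\<^sup>*)" for R :: "('a \<times> 'a) set"
    by (rule sym_rtrancl) (simp add: sym_Un_converse)
  then show ?thesis
    unfolding comp_rel_def Let_def by (simp add: equiv_def refl_rtrancl trans_rtrancl)
qed

lemma op_mem_rack_component_iff:
  assumes "C \<in> rack_components op"
  shows "op a b \<in> C \<longleftrightarrow> a \<in> C"
proof -
  have "(a, op a b) \<in> comp_rel op"
    unfolding comp_rel_def Let_def by blast
  moreover from this have "(op a b, a) \<in> comp_rel op"
    using equiv_comp_rel[of op] unfolding equiv_def sym_def by blast
  ultimately show ?thesis
    using in_quotient_imp_closed[OF equiv_comp_rel assms[unfolded rack_components_def]] by blast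
qed

lemma rack_component_of:
  "comp_rel op `` {x} \<in> rack_components op" "x \<in> comp_rel op `` {x}"
  unfolding rack_components_def using equiv_comp_rel[of op]
  by (auto intro: quotientI simp: equiv_def refl_on_def)

lemma finite_rack_components: "finite (rack_components (op :: 'a::finite \<Rightarrow> 'a \<Rightarrow> 'a))"
  unfolding rack_components_def by (rule finite_quotient) simp_all

lemma mem_rack_component_iff:
  assumes "C \<in> rack_components op" and "D \<in> rack_components op" and "x \<in> C"
  shows "x \<in> D \<longleftrightarrow> D = C"
  using assms quotient_disj[OF equiv_comp_rel[of op], of C D]
  unfolding rack_components_def by blast

definition count_in :: "'a set \<Rightarrow> 'a list \<Rightarrow> nat" where
  "count_in C xs = length (filter (\<lambda>a. a \<in> C) xs)"

lemma count_in_simps [simp]: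
  "count_in C [] = 0"
  "count_in C (x # xs) = (if x \<in> C then Suc (count_in C xs) else count_in C xs)"
  "count_in C (xs @ ys) = count_in C xs + count_in C ys"
  by (simp_all add: count_in_def)

lemma card_index_set_eq_count_in: "card {i. i < length xs \<and> xs ! i \<in> C} = count_in C xs"
  unfolding count_in_def by (simp add: length_filter_conv_card)

lemma count_in_braid_equiv:
  assumes "C \<in> rack_components op" and "braid_equiv op xs ys"
  shows "count_in C xs = count_in C ys"
proof (rule braid_equiv_invariant[OF _ assms(2)])
  fix us vs assume "braid_step op us vs"
  then obtain u v a b where "us = u @ [a, b] @ v" "vs = u @ [b, op a b] @ v"
    unfolding braid_step_def by blast
  then show "count_in C us = count_in C vs"
    by (simp add: op_mem_rack_component_iff[OF assms(1)])
qed

lemma exists_mem_count_list_ge: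
  fixes C :: "'a::finite set"
  assumes "0 < n" and "n * card (UNIV :: 'a set) \<le> count_in C v"
  shows "\<exists>y\<in>C. n \<le> count_list v y"
proof (rule ccontr)
  assume "\<not> ?thesis"
  then have small: "count_list v y \<le> n - 1" if "y \<in> C" for y
    using that by fastforce
  have "count_in C v = (\<Sum>y\<in>C. count_list (filter (\<lambda>a. a \<in> C) v) y)"
    unfolding count_in_def by (rule sum_count_set[symmetric]) auto
  also have "\<dots> \<le> (\<Sum>y\<in>C. n - 1)"
  proof (rule sum_mono)
    fix y assume "y \<in> C"
    have "count_list (filter (\<lambda>a. a \<in> C) v) y \<le> count_list v y"
      by (induction v) auto
    with small[OF \<open>y \<in> C\<close>] show "count_list (filter (\<lambda>a. a \<in> C) v) y \<le> n - 1"
      by linarith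
  qed
  also have "\<dots> \<le> card (UNIV :: 'a set) * (n - 1)"
    by (simp add: card_mono mult_right_mono)
  also have "\<dots> < n * card (UNIV :: 'a set)"
    using assms(1) finite_UNIV_card_ge_0[where 'a = 'a] by (simp add: algebra_simps)
  finally show False
    using assms(2) by linarith
qed

lemma length_eq_sum_count_in:
  fixes op :: "'a::finite \<Rightarrow> 'a \<Rightarrow> 'a"
  shows "length xs = (\<Sum>C\<in>rack_components op. count_in C xs)"
proof (induction xs)
  case (Cons x xs)
  let ?K = "comp_rel op `` {x}"
  have "x \<in> C \<longleftrightarrow> C = ?K" if "C \<in> rack_components op" for C
    using mem_rack_component_iff[OF rack_component_of(1) that rack_component_of(2)] .
  then have "(\<Sum>C\<in>rack_components op. count_in C (x # xs))
      = (\<Sum>C\<in>rack_components op. count_in C xs + (if C = ?K then 1 else 0))"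
    by (intro sum.cong) auto
  also have "\<dots> = (\<Sum>C\<in>rack_components op. count_in C xs) + 1"
    using rack_component_of(1) finite_rack_components by (simp add: sum.distrib)
  finally show ?case
    using Cons by simp
qed simp

definition rack_closed :: "('a \<Rightarrow> 'a \<Rightarrow> 'a) \<Rightarrow> 'a set \<Rightarrow> bool" where
  "rack_closed op Y \<longleftrightarrow> (\<forall>a\<in>Y. \<forall>b\<in>Y. op a b \<in> Y)"

lemma generates_iff: "generates op xs \<longleftrightarrow> (\<forall>Y. rack_closed op Y \<longrightarrow> set xs \<subseteq> Y \<longrightarrow> Y = UNIV)"
  unfolding generates_def rack_closed_def by blast

lemma generates_mono: "generates op xs \<Longrightarrow> set xs \<subseteq> set ys \<Longrightarrow> generates op ys"
  unfolding generates_def by blast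

lemma sg_mult_mem_SX_star:
  assumes "w \<in> structure_semigroup op" and "z \<in> SX_star op N"
  shows "sg_mult op w z \<in> SX_star op N"
proof -
  obtain u where u: "w = braid_class op u"
    using assms(1) unfolding structure_semigroup_def by blast
  obtain v where v: "z = braid_class op v" "v \<noteq> []" "generates op v"
      "\<forall>C\<in>rack_components op. N \<le> count_in C v"
    using assms(2) unfolding SX_star_def card_index_set_eq_count_in by blast
  have "generates op (u @ v)"
    using v(3) by (rule generates_mono) auto
  moreover have "\<forall>C\<in>rack_components op. N \<le> count_in C (u @ v)"
    using v(4) by (simp add: trans_le_add2)
  ultimately show ?thesis
    unfolding SX_star_def card_index_set_eq_count_in u v(1) sg_mult_braid_class
    using v(2) by blast
qed

section \<open>Racks with a permutation exponent\<close>

lemma bij_funpow_eq_id: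
  fixes f :: "'a::finite \<Rightarrow> 'a"
  assumes "bij f"
  shows "\<exists>k>0. f ^^ k = id"
proof -
  have "\<not> inj (\<lambda>i::nat. f ^^ i)"
    using finite_imageD[of "\<lambda>i::nat. f ^^ i" UNIV] by auto
  then obtain i j where "i \<noteq> j" "f ^^ i = f ^^ j"
    unfolding inj_def by blast
  then obtain m n where mn: "m < n" "f ^^ m = f ^^ n"
    by (metis linorder_neqE_nat)
  have "(f ^^ m) ((f ^^ (n - m)) x) = (f ^^ m) x" for x
    using mn funpow_add[of m "n - m" f] by (simp add: fun_eq_iff)
  moreover have "inj (f ^^ m)"
    using assms bij_is_inj inj_fn by blast
  ultimately have "f ^^ (n - m) = id"
    by (simp add: fun_eq_iff inj_eq)
  with mn(1) show ?thesis
    by (intro exI[of _ "n - m"]) simp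
qed

lemma exists_bij_exponent: "\<exists>E>0. \<forall>f::'a::finite \<Rightarrow> 'a. bij f \<longrightarrow> f ^^ E = id"
proof -
  obtain k where k: "\<And>f::'a \<Rightarrow> 'a. bij f \<Longrightarrow> 0 < k f \<and> f ^^ k f = id"
    using bij_funpow_eq_id by metis
  define E where "E = (\<Prod>f\<in>{f::'a \<Rightarrow> 'a. bij f}. k f)"
  have "f ^^ E = id" if "bij f" for f :: "'a \<Rightarrow> 'a"
  proof -
    have "k f dvd E"
      unfolding E_def using that by (intro dvd_prodI) simp_all
    then obtain q where "E = k f * q" ..
    then show ?thesis
      using k[OF that] by (simp add: funpow_mult[symmetric])
  qed
  moreover have "0 < E"
    unfolding E_def using k by (simp add: prod_pos)
  ultimately show ?thesis by blast
qed

definition translation_closure :: "('a \<Rightarrow> 'a \<Rightarrow> 'a) \<Rightarrow> 'a set \<Rightarrow> ('a \<times> 'a) set" where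
  "translation_closure op S = {(z, op z s) | z s. s \<in> S}\<^sup>*"

lemma translation_closure_step:
  "(a, b) \<in> translation_closure op S \<Longrightarrow> s \<in> S \<Longrightarrow> (a, op b s) \<in> translation_closure op S"
  unfolding translation_closure_def by (rule rtrancl_into_rtrancl) auto

lemma translation_closure_trans:
  "(a, b) \<in> translation_closure op S \<Longrightarrow> (b, c) \<in> translation_closure op S \<Longrightarrow>
    (a, c) \<in> translation_closure op S"
  unfolding translation_closure_def by (rule rtrancl_trans)

lemma translation_closure_funpow:
  "s \<in> S \<Longrightarrow> (z, ((\<lambda>x. op x s) ^^ n) z) \<in> translation_closure op S"
  by (induction n)
     (auto simp: translation_closure_def intro: translation_closure_step[unfolded translation_closure_def])

locale finite_rack =
  fixes op :: "'a::finite \<Rightarrow> 'a \<Rightarrow> 'a" and E :: nat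
  assumes is_rack: "is_rack op"
    and exponent_pos: "0 < E"
    and funpow_exponent: "bij (f :: 'a \<Rightarrow> 'a) \<Longrightarrow> f ^^ E = id"
begin

lemma self_distrib: "op (op z x) y = op (op z y) (op x y)"
  using is_rack unfolding is_rack_def by blast

lemma bij_right_translation: "bij (\<lambda>x. op x y)"
  using is_rack unfolding is_rack_def by blast

lemma funpow_exponent_pred_inverse:
  fixes f :: "'a \<Rightarrow> 'a"
  assumes "bij f"
  shows "f ((f ^^ (E - 1)) z) = z" and "(f ^^ (E - 1)) (f z) = z"
proof -
  have "f ^^ Suc (E - 1) = id"
    using exponent_pos funpow_exponent[OF assms] by simp
  then show "f ((f ^^ (E - 1)) z) = z" "(f ^^ (E - 1)) (f z) = z"
    by (metis comp_apply funpow.simps(2) id_apply, metis comp_apply funpow_Suc_right id_apply)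
qed

lemma rack_closed_op_mem_iff:
  assumes "rack_closed op Y" and "b \<in> Y"
  shows "op a b \<in> Y \<longleftrightarrow> a \<in> Y"
proof
  assume "op a b \<in> Y"
  then have "((\<lambda>x. op x b) ^^ n) (op a b) \<in> Y" for n
    using assms unfolding rack_closed_def by (induction n) auto
  then show "a \<in> Y"
    using funpow_exponent_pred_inverse(2)[OF bij_right_translation] by metis
qed (use assms in \<open>auto simp: rack_closed_def\<close>)

lemma generates_braid_equiv:
  "braid_equiv op xs ys \<Longrightarrow> generates op xs = generates op ys"
proof (erule braid_equiv_invariant[rotated])
  fix us vs assume "braid_step op us vs"
  then obtain u v a b where "us = u @ [a, b] @ v" "vs = u @ [b, op a b] @ v"
    unfolding braid_step_def by blast
  then have "set us \<subseteq> Y \<longleftrightarrow> set vs \<subseteq> Y" if "rack_closed op Y" for Y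
    using rack_closed_op_mem_iff[OF that] by auto
  then show "generates op us = generates op vs"
    unfolding generates_iff by blast
qed

text \<open>
  By self-distributivity, translation by \<open>op b t\<close> is translation by \<open>b\<close> conjugated by
  translation by \<open>t\<close>, whose inverse is a power of itself.
\<close>

lemma translation_closure_right_translation:
  assumes "(s, b) \<in> translation_closure op S" and "s \<in> S"
  shows "(z, op z b) \<in> translation_closure op S"
  using assms(1) unfolding translation_closure_def
proof (induction arbitrary: z rule: rtrancl_induct)
  case base
  show ?case using assms(2) by blast
next
  case (step b b')
  then obtain t where t: "b' = op b t" "t \<in> S" by blast
  define z0 where "z0 = ((\<lambda>x. op x t) ^^ (E - 1)) z"
  have "(z, z0) \<in> translation_closure op S"
    unfolding z0_def by (rule translation_closure_funpow[OF t(2)])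
  then have "(z, op z0 b) \<in> translation_closure op S"
    using step.IH[of z0, folded translation_closure_def] by (rule translation_closure_trans)
  then have "(z, op (op z0 b) t) \<in> translation_closure op S"
    using t(2) by (rule translation_closure_step)
  moreover have "op (op z0 b) t = op (op z0 t) (op b t)"
    by (rule self_distrib)
  moreover have "op z0 t = z"
    unfolding z0_def by (rule funpow_exponent_pred_inverse(1)[OF bij_right_translation])
  ultimately show ?case
    unfolding translation_closure_def t(1) by simp
qed

lemma translation_closure_of_generates:
  assumes "generates op w"
  shows "(z, op z b) \<in> translation_closure op (set w)"
proof -
  let ?T = "translation_closure op (set w)"
  define Y where "Y = {b. \<exists>s\<in>set w. (s, b) \<in> ?T}"
  have "rack_closed op Y"
    unfolding rack_closed_def
  proof (intro ballI)
    fix a b assume "a \<in> Y" "b \<in> Y"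
    then obtain s1 s2 where s1: "(s1, a) \<in> ?T" "s1 \<in> set w" and s2: "(s2, b) \<in> ?T" "s2 \<in> set w"
      unfolding Y_def by blast
    from s2 have "(a, op a b) \<in> ?T"
      by (rule translation_closure_right_translation)
    with s1(1) have "(s1, op a b) \<in> ?T"
      by (rule translation_closure_trans)
    with s1(2) show "op a b \<in> Y"
      unfolding Y_def by blast
  qed
  moreover have "set w \<subseteq> Y"
    unfolding Y_def translation_closure_def by blast
  ultimately have "b \<in> Y"
    using assms unfolding generates_iff by blast
  then obtain s where "(s, b) \<in> ?T" "s \<in> set w"
    unfolding Y_def by blast
  then show ?thesis
    by (rule translation_closure_right_translation)
qed

lemma comp_rel_subset_translation_closure:
  assumes "generates op w"
  shows "comp_rel op \<subseteq> translation_closure op (set w)"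
proof -
  let ?T = "translation_closure op (set w)"
  note fwd = translation_closure_of_generates[OF assms]
  have pow: "(z, ((\<lambda>x. op x b) ^^ n) z) \<in> ?T" for z b n
  proof (induction n)
    case 0
    show ?case unfolding translation_closure_def by simp
  next
    case (Suc n)
    then show ?case
      using translation_closure_trans[OF Suc fwd] by simp
  qed
  have bwd: "(op z b, z) \<in> ?T" for z b
    using pow[where z = "op z b" and b = b and n = "E - 1"]
    unfolding funpow_exponent_pred_inverse(2)[OF bij_right_translation] .
  have "{(x, op x y) | x y. True} \<union> {(x, op x y) | x y. True}\<inverse> \<subseteq> ?T"
    using fwd bwd by blast
  then have "({(x, op x y) | x y. True} \<union> {(x, op x y) | x y. True}\<inverse>)\<^sup>* \<subseteq> ?T\<^sup>*"
    by (rule rtrancl_mono)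
  then show ?thesis
    unfolding comp_rel_def Let_def translation_closure_def by simp
qed

lemma foldl_replicate: "foldl op a (replicate n z) = ((\<lambda>x. op x z) ^^ n) a"
  by (induction n arbitrary: a) (simp_all add: funpow_Suc_right del: funpow.simps)

lemma bij_foldl: "bij (\<lambda>a. foldl op a p)"
proof (induction p)
  case (Cons c p)
  have "(\<lambda>a. foldl op a (c # p)) = (\<lambda>a. foldl op a p) \<circ> (\<lambda>x. op x c)"
    by auto
  with Cons show ?case
    using bij_right_translation bij_comp by metis
qed (simp add: id_def[symmetric])

lemma braid_equiv_replicate_exponent_commute:
  "braid_equiv op (q @ replicate E z) (replicate E z @ q)"
  using braid_equiv_append_commute[of op q "replicate E z"]
  by (simp add: foldl_replicate funpow_exponent[OF bij_right_translation])

lemma braid_equiv_replicate_exponent_prefix: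
  "braid_equiv op (replicate E z @ p) (replicate E (foldl op z p) @ p)"
  using braid_equiv_append_commute[of op "replicate E z" p]
    braid_equiv_replicate_exponent_commute[of p "foldl op z p"]
  by (simp add: braid_equiv_trans)

lemma braid_equiv_replicate_exponent_translate_mem:
  assumes "s \<in> set w"
  shows "braid_equiv op (replicate E z @ w) (replicate E (op z s) @ w)"
proof -
  obtain p q where w: "w = p @ s # q"
    using split_list[OF assms] by blast
  \<comment> \<open>Pushing the block through \<open>p\<close> \<open>E - 1\<close> times and then through \<open>p @ [s]\<close>
    translates it by \<open>s\<close> alone.\<close>
  let ?f = "\<lambda>a. foldl op a p"
  have step: "braid_equiv op (replicate E a @ u @ v) (replicate E (foldl op a u) @ u @ v)" for a u v
    using braid_equiv_append_right[OF braid_equiv_replicate_exponent_prefix] by fastforce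
  have "braid_equiv op (replicate E z @ w) (replicate E ((?f ^^ n) z) @ w)" for n
    by (induction n) (auto simp: w intro: braid_equiv_trans[OF _ step[of _ p "s # q"]])
  also have "braid_equiv op (replicate E ((?f ^^ (E - 1)) z) @ w)
      (replicate E (foldl op ((?f ^^ (E - 1)) z) (p @ [s])) @ w)"
    using step[of _ "p @ [s]" q] unfolding w by simp
  finally show ?thesis
    using funpow_exponent_pred_inverse(1)[OF bij_foldl] by simp
qed

lemma braid_equiv_replicate_exponent_translate:
  "(y, x) \<in> translation_closure op (set w) \<Longrightarrow>
    braid_equiv op (replicate E y @ w) (replicate E x @ w)"
  unfolding translation_closure_def
  by (induction rule: rtrancl_induct)
     (auto intro: braid_equiv_trans braid_equiv_replicate_exponent_translate_mem)

lemma exists_braid_equiv_Cons: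
  assumes "generates op v" and "C \<in> rack_components op" and "x \<in> C"
    and "2 * E * card (UNIV :: 'a set) \<le> count_in C v"
  shows "\<exists>u. braid_equiv op v (x # u) \<and> generates op u"
proof -
  obtain y where y: "y \<in> C" "2 * E \<le> count_list v y"
    using exists_mem_count_list_ge[of "2 * E" C v] assms(4) exponent_pos by auto
  \<comment> \<open>\<open>E\<close> copies of \<open>y\<close> are turned into copies of \<open>x\<close>; the other \<open>E\<close> keep the tail
    generating.\<close>
  then obtain rest where "braid_equiv op v (replicate (2 * E) y @ rest)"
    using braid_equiv_replicate_prefix[OF y(2)] by blast
  moreover define w where "w = replicate E y @ rest"
  ultimately have v_w: "braid_equiv op v (replicate E y @ w)"
    by (simp add: mult_2 replicate_add)
  have "set (replicate E y @ w) = set w"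
    using exponent_pos by (auto simp: w_def)
  then have "generates op w"
    using assms(1) generates_braid_equiv[OF v_w] generates_mono[of op _ w] by simp
  have "(y, x) \<in> comp_rel op"
    using in_quotient_imp_in_rel[OF equiv_comp_rel assms(2)[unfolded rack_components_def]]
      assms(3) y(1) by simp
  then have "(y, x) \<in> translation_closure op (set w)"
    using comp_rel_subset_translation_closure[OF \<open>generates op w\<close>] by blast
  with v_w have "braid_equiv op v (replicate E x @ w)"
    using braid_equiv_replicate_exponent_translate braid_equiv_trans by blast
  moreover have "replicate E x @ w = x # (replicate (E - 1) x @ w)"
    using exponent_pos by (cases E) simp_all
  moreover have "generates op (replicate (E - 1) x @ w)"
    using \<open>generates op w\<close> by (rule generates_mono) auto
  ultimately show ?thesis
    by auto
qed

section \<open>Counting generating orbits\<close>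

text \<open>\<open>generating_classes d\<close> is the paper's \<open>X\<^sup>*(n\<^sub>1, \<dots>, n\<^sub>k)/B\<^sub>n\<close> with \<open>n\<^sub>j = d C\<^sub>j\<close>.\<close>

definition generating_classes :: "('a set \<Rightarrow> nat) \<Rightarrow> 'a list set set" where
  "generating_classes d = {braid_class op xs | xs. generates op xs \<and>
      (\<forall>C\<in>rack_components op. count_in C xs = d C)}"

lemma generating_classes_cong:
  "\<forall>C\<in>rack_components op. d C = d' C \<Longrightarrow> generating_classes d = generating_classes d'"
  unfolding generating_classes_def by simp

lemma finite_generating_classes: "finite (generating_classes d)"
proof -
  let ?L = "\<Sum>C\<in>rack_components op. d C"
  have "generating_classes d \<subseteq> braid_class op ` {xs. set xs \<subseteq> UNIV \<and> length xs \<le> ?L}"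
    unfolding generating_classes_def using length_eq_sum_count_in[of _ op] by auto
  moreover have "finite {xs :: 'a list. set xs \<subseteq> UNIV \<and> length xs \<le> ?L}"
    by (rule finite_lists_length_le) simp
  ultimately show ?thesis
    using finite_surj by blast
qed

definition large_degree :: "('a set \<Rightarrow> nat) \<Rightarrow> bool" where
  "large_degree d \<longleftrightarrow> (\<forall>C\<in>rack_components op. 2 * E * card (UNIV :: 'a set) \<le> d C)"

lemma image_sg_mult_singleton_generating_classes:
  assumes "large_degree d" and C: "C \<in> rack_components op" "x \<in> C"
  shows "sg_mult op (braid_class op [x]) ` generating_classes d = generating_classes (d(C := Suc (d C)))"
    (is "?L = ?R")
proof
  have count_Cons: "count_in D (x # xs) = (if D = C then Suc (count_in D xs) else count_in D xs)"
    if "D \<in> rack_components op" for D xs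
    using mem_rack_component_iff[OF C(1) that C(2)] by simp
  show "?L \<subseteq> ?R"
  proof
    fix c assume "c \<in> ?L"
    then obtain xs where c: "c = braid_class op (x # xs)" and "generates op xs"
        and "\<forall>D\<in>rack_components op. count_in D xs = d D"
      unfolding generating_classes_def by (auto simp: sg_mult_braid_class[of op "[x]", simplified])
    moreover have "generates op (x # xs)"
      using \<open>generates op xs\<close> by (rule generates_mono) auto
    moreover have "\<forall>D\<in>rack_components op. count_in D (x # xs) = (d(C := Suc (d C))) D"
      using calculation(3) by (simp add: count_Cons del: count_in_simps)
    ultimately show "c \<in> ?R"
      unfolding generating_classes_def by blast
  qed
  show "?R \<subseteq> ?L"
  proof
    fix c assume "c \<in> ?R"
    then obtain v where c: "c = braid_class op v" and "generates op v"
        and v: "\<forall>D\<in>rack_components op. count_in D v = (d(C := Suc (d C))) D"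
      unfolding generating_classes_def by blast
    moreover have "2 * E * card (UNIV :: 'a set) \<le> count_in C v"
      using v assms(1) C(1) unfolding large_degree_def by fastforce
    ultimately obtain u where u: "braid_equiv op v (x # u)" "generates op u"
      using exists_braid_equiv_Cons C by blast
    have "count_in D u = d D" if "D \<in> rack_components op" for D
      using v count_in_braid_equiv[OF that u(1)] count_Cons[OF that] that by (auto split: if_splits)
    with u(2) have "braid_class op u \<in> generating_classes d"
      unfolding generating_classes_def by blast
    moreover have "c = sg_mult op (braid_class op [x]) (braid_class op u)"
      using c u(1) by (simp add: sg_mult_braid_class braid_class_eq_iff)
    ultimately show "c \<in> ?L"
      by blast
  qed
qed

lemma card_generating_classes_Suc_le:
  assumes "large_degree d" and "C \<in> rack_components op"
  shows "card (generating_classes (d(C := Suc (d C)))) \<le> card (generating_classes d)"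
proof -
  obtain x where "x \<in> C"
    using in_quotient_imp_non_empty[OF equiv_comp_rel assms(2)[unfolded rack_components_def]]
    by blast
  then show ?thesis
    using image_sg_mult_singleton_generating_classes[OF assms] card_image_le[OF finite_generating_classes]
    by metis
qed

lemma card_generating_classes_antimono:
  assumes "large_degree d" and "\<forall>C\<in>rack_components op. d C \<le> d' C"
  shows "card (generating_classes d') \<le> card (generating_classes d)"
  using assms(2)
proof (induction "\<Sum>C\<in>rack_components op. d' C" arbitrary: d' rule: less_induct)
  case less
  show ?case
  proof (cases "\<exists>C\<in>rack_components op. d C < d' C")
    case False
    with less.prems have "\<forall>C\<in>rack_components op. d C = d' C"
      by (auto simp: not_less intro: le_antisym)
    then have "generating_classes d = generating_classes d'"
      by (rule generating_classes_cong)
    then show ?thesis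
      by simp
  next
    case True
    then obtain C where C: "C \<in> rack_components op" "d C < d' C" ..
    define d'' where "d'' = d'(C := d' C - 1)"
    have le: "\<forall>D\<in>rack_components op. d D \<le> d'' D"
      using less.prems C(2) by (auto simp: d''_def)
    have "(\<Sum>D\<in>rack_components op. d'' D) < (\<Sum>D\<in>rack_components op. d' D)"
      using finite_rack_components C by (intro sum_strict_mono_ex1) (auto simp: d''_def)
    then have "card (generating_classes d'') \<le> card (generating_classes d)"
      using le by (rule less.hyps)
    moreover have "large_degree d''"
      using assms(1) le unfolding large_degree_def by (meson order_trans)
    moreover have "d' = d''(C := Suc (d'' C))"
      using C(2) by (auto simp: d''_def)
    ultimately show ?thesis
      using card_generating_classes_Suc_le[OF _ C(1)] by (metis order_trans)
  qed
qed

definition stable_degree :: "'a set \<Rightarrow> nat" where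
  "stable_degree = arg_min (\<lambda>d. card (generating_classes d)) large_degree"

lemma stable_degree_minimal:
  "large_degree stable_degree"
  "large_degree d \<Longrightarrow> card (generating_classes stable_degree) \<le> card (generating_classes d)"
proof -
  have "large_degree (\<lambda>_. 2 * E * card (UNIV :: 'a set))"
    unfolding large_degree_def by simp
  from arg_min_nat_lemma[of large_degree, OF this, of "\<lambda>d. card (generating_classes d)"]
  show "large_degree stable_degree"
    "large_degree d \<Longrightarrow> card (generating_classes stable_degree) \<le> card (generating_classes d)"
    unfolding stable_degree_def by blast+
qed

lemma card_generating_classes_eq_card_stable:
  assumes "\<forall>C\<in>rack_components op. stable_degree C \<le> d C"
  shows "card (generating_classes d) = card (generating_classes stable_degree)"
proof -
  have "large_degree d"
    using stable_degree_minimal(1) assms unfolding large_degree_def by (meson order_trans)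
  then show ?thesis
    using card_generating_classes_antimono[OF stable_degree_minimal(1) assms] stable_degree_minimal(2)
    by (simp add: le_antisym)
qed

lemma inj_on_sg_mult_singleton_generating_classes:
  assumes "\<forall>C\<in>rack_components op. stable_degree C \<le> d C"
  shows "inj_on (sg_mult op (braid_class op [x])) (generating_classes d)"
proof (rule eq_card_imp_inj_on[OF finite_generating_classes])
  let ?C = "comp_rel op `` {x}"
  have "large_degree d"
    using stable_degree_minimal(1) assms unfolding large_degree_def by (meson order_trans)
  then have "card (sg_mult op (braid_class op [x]) ` generating_classes d)
      = card (generating_classes (d(?C := Suc (d ?C))))"
    by (simp add: image_sg_mult_singleton_generating_classes[OF _ rack_component_of])
  also have "\<dots> = card (generating_classes stable_degree)"
    using assms by (intro card_generating_classes_eq_card_stable) (simp add: le_SucI)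
  also have "\<dots> = card (generating_classes d)"
    using card_generating_classes_eq_card_stable[OF assms] by simp
  finally show "card (sg_mult op (braid_class op [x]) ` generating_classes d)
      = card (generating_classes d)" .
qed

lemma braid_equiv_append_cancel_left:
  assumes "generates op v" and "generates op v'"
    and "\<forall>C\<in>rack_components op. stable_degree C \<le> count_in C v"
    and "\<forall>C\<in>rack_components op. stable_degree C \<le> count_in C v'"
  shows "braid_equiv op (u @ v) (u @ v') \<Longrightarrow> braid_equiv op v v'"
proof (induction u)
  case (Cons x u)
  define d where "d C = count_in C (u @ v)" for C
  have "count_in C (u @ v') = d C" if "C \<in> rack_components op" for C
    using count_in_braid_equiv[OF that Cons.prems] by (simp add: d_def split: if_splits)
  moreover have "generates op (u @ v)" "generates op (u @ v')"
    using assms(1,2) by (auto intro: generates_mono)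
  ultimately have mem: "braid_class op (u @ v) \<in> generating_classes d"
      "braid_class op (u @ v') \<in> generating_classes d"
    unfolding generating_classes_def d_def by blast+
  have stable_le: "\<forall>C\<in>rack_components op. stable_degree C \<le> d C"
    using assms(3) by (simp add: d_def trans_le_add2)
  have "sg_mult op (braid_class op [x]) (braid_class op (u @ v))
      = sg_mult op (braid_class op [x]) (braid_class op (u @ v'))"
    using Cons.prems by (simp add: sg_mult_braid_class braid_class_eq_iff)
  then have "braid_class op (u @ v) = braid_class op (u @ v')"
    by (rule inj_onD[OF inj_on_sg_mult_singleton_generating_classes[OF stable_le] _ mem])
  then show ?case
    using Cons.IH by (simp add: braid_class_eq_iff)
qed simp

lemma inj_on_sg_mult_SX_star:
  assumes "\<forall>C\<in>rack_components op. stable_degree C \<le> N" and "w \<in> structure_semigroup op"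
  shows "inj_on (sg_mult op w) (SX_star op N)"
proof (rule inj_onI)
  fix z z' assume "z \<in> SX_star op N" "z' \<in> SX_star op N" and eq: "sg_mult op w z = sg_mult op w z'"
  then obtain v v' where v: "z = braid_class op v" "generates op v"
      "\<forall>C\<in>rack_components op. N \<le> count_in C v"
    and v': "z' = braid_class op v'" "generates op v'"
      "\<forall>C\<in>rack_components op. N \<le> count_in C v'"
    unfolding SX_star_def card_index_set_eq_count_in by blast
  obtain u where u: "w = braid_class op u"
    using assms(2) unfolding structure_semigroup_def by blast
  have "braid_equiv op (u @ v) (u @ v')"
    using eq unfolding u v(1) v'(1) sg_mult_braid_class braid_class_eq_iff .
  then have "braid_equiv op v v'"
    using braid_equiv_append_cancel_left[OF v(2) v'(2)] v(3) v'(3) assms(1)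
    by (meson order_trans)
  then show "z = z'"
    unfolding v(1) v'(1) braid_class_eq_iff .
qed

end

theorem corollary4p23:
  fixes op :: "'a::finite \<Rightarrow> 'a \<Rightarrow> 'a"
  assumes "is_rack op"
  shows "\<exists>N0. \<forall>N\<ge>N0. \<forall>w\<in>structure_semigroup op.
           (\<forall>z\<in>SX_star op N. sg_mult op w z \<in> SX_star op N) \<and>
           inj_on (sg_mult op w) (SX_star op N)"
proof -
  obtain E where "0 < E" "\<forall>f::'a \<Rightarrow> 'a. bij f \<longrightarrow> f ^^ E = id"
    using exists_bij_exponent by blast
  with assms interpret finite_rack op E
    by unfold_locales blast+
  let ?N0 = "Max (stable_degree ` rack_components op)"
  have bound: "\<forall>C\<in>rack_components op. stable_degree C \<le> N" if "?N0 \<le> N" for N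
    using that Max_ge[OF finite_imageI[OF finite_rack_components] imageI] by (meson order_trans)
  show ?thesis
  proof (intro exI[of _ ?N0] allI impI ballI conjI)
    fix N w z assume "?N0 \<le> N" "w \<in> structure_semigroup op"
    then show "inj_on (sg_mult op w) (SX_star op N)"
      by (intro inj_on_sg_mult_SX_star bound)
    show "z \<in> SX_star op N \<Longrightarrow> sg_mult op w z \<in> SX_star op N"
      using \<open>w \<in> structure_semigroup op\<close> by (rule sg_mult_mem_SX_star)
  qed
qed

end
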